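(* Let $P$ be an Eulerian poset. Suppose that to every interval $[x,y]$ of $P$ (viewed as an Eulerian poset of rank $\rho(y)-\rho(x)$) a polynomial $B'([x,y];u,v)\in\mathbb{Z}[u,v]$ is assigned such that: (a) $B'([x,x];u,v)=1$ for all $x$; (b) for $x<y$ the degree of $B'([x,y];u,v)$ in $v$ is less than $(\rho(y)-\rho(x))/2$; (c) for all $x\le y$, $$\sum_{x\le z\le y}B'([x,z];u^{-1},v^{-1})(uv)^{\rho(z)-\rho(x)}(v-u)^{\rho(y)-\rho(z)}=\sum_{x\le z\le y}B'([z,y];u,v)(uv-1)^{\rho(z)-\rho(x)}.$$ Then $B'([x,y];u,v)=B([x,y];u,v)$ for all $x\le y$; in particular $B'(P;u,v)=B(P;u,v)$.
   Context: An Eulerian poset is a finite poset with least element $\hat0$, greatest element $\hat1$, all maximal chains of the same length (the rank $d$), rank function $\rho$, and Möbius function $\mu(x,y)=(-1)^{\rho(y)-\rho(x)}$ for $x\le y$; intervals $[x,y]$ are Eulerian of rank $\rho(y)-\rho(x)$. For Eulerian $Q$ of rank $e$: $G(Q,t)=H(Q,t)=1$ if $e=0$; for $e>0$, $H(Q,t)=\sum_{\hat0<x\le\hat1}(t-1)^{\rho(x)-1}G([x,\hat1],t)$, $G(Q,t)=\tau_{<e/2}((1-t)H(Q,t))$ with $\tau_{<r}(\sum a_it^i)=\sum_{i<r}a_it^i$. $B(Q;u,v)\in\mathbb{Z}[u,v]$ is defined by $B=1$ if $e=0$ and for $e>0$ recursively by $\sum_{\hat0\le x\le\hat1}B([\hat0,x];u,v)u^{e-\rho(x)}G([x,\hat1],u^{-1}v)=G(Q,uv)$.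 *)

theory Defs
  imports Main "HOL-Computational_Algebra.Polynomial"
begin

section \<open>Finite posets as carriers P :: 'a set with the ambient order\<close>

definition is_chain :: "'a::order set \<Rightarrow> 'a set \<Rightarrow> bool" where
  "is_chain P C \<longleftrightarrow> C \<subseteq> P \<and> (\<forall>a\<in>C. \<forall>b\<in>C. a \<le> b \<or> b \<le> a)"

definition is_maximal_chain :: "'a::order set \<Rightarrow> 'a set \<Rightarrow> bool" where
  "is_maximal_chain P C \<longleftrightarrow> is_chain P C \<and> \<not> (\<exists>C'. is_chain P C' \<and> C \<subset> C')"

definition rho :: "'a::order set \<Rightarrow> 'a \<Rightarrow> nat" where
  "rho P x = Max (card ` {C. is_chain {z\<in>P. z \<le> x} C}) - 1"

text \<open>Moebius function via the standard recursion (fuel-bounded; fuel card P suffices).\<close>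
fun muf :: "'a::order set \<Rightarrow> nat \<Rightarrow> 'a \<Rightarrow> 'a \<Rightarrow> int" where
  "muf P 0 x y = (if x = y then 1 else 0)"
| "muf P (Suc n) x y = (if x = y then 1 else if x < y
      then - (\<Sum>z\<in>{z\<in>P. x \<le> z \<and> z < y}. muf P n x z) else 0)"

definition mobius :: "'a::order set \<Rightarrow> 'a \<Rightarrow> 'a \<Rightarrow> int" where
  "mobius P x y = muf P (card P) x y"

definition eulerian :: "'a::order set \<Rightarrow> bool" where
  "eulerian P \<longleftrightarrow> finite P
     \<and> (\<exists>b\<in>P. \<forall>x\<in>P. b \<le> x) \<and> (\<exists>t\<in>P. \<forall>x\<in>P. x \<le> t)
     \<and> (\<forall>C C'. is_maximal_chain P C \<and> is_maximal_chain P C' \<longrightarrow> card C = card C')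
     \<and> (\<forall>x\<in>P. \<forall>y\<in>P. x \<le> y \<longrightarrow> mobius P x y = (-1) ^ (rho P y - rho P x))"

definition trunc_half :: "nat \<Rightarrow> int poly \<Rightarrow> int poly" where
  "trunc_half e p = (\<Sum>i\<in>{i. i < e \<and> 2 * i < e}. monom (coeff p i) i)"

fun Gf :: "'a::order set \<Rightarrow> nat \<Rightarrow> 'a \<Rightarrow> 'a \<Rightarrow> int poly" where
  "Gf P 0 x y = (if x = y then 1 else 0)"
| "Gf P (Suc n) x y = (if x = y then 1 else
      trunc_half (rho P y - rho P x)
        ([:1, -1:] * (\<Sum>z\<in>{z\<in>P. x < z \<and> z \<le> y}.
              [:-1, 1:] ^ (rho P z - rho P x - 1) * Gf P n z y)))"

definition Gpol :: "'a::order set \<Rightarrow> 'a \<Rightarrow> 'a \<Rightarrow> int poly" where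
  "Gpol P x y = Gf P (card P) x y"

definition Hpol :: "'a::order set \<Rightarrow> 'a \<Rightarrow> 'a \<Rightarrow> int poly" where
  "Hpol P x y = (if x = y then 1 else
      (\<Sum>z\<in>{z\<in>P. x < z \<and> z \<le> y}. [:-1, 1:] ^ (rho P z - rho P x - 1) * Gpol P z y))"

section \<open>Two-variable polynomials: Z[u,v] as int poly poly (outer variable v, coefficients in Z[u])\<close>

definition Uvar :: "int poly poly" where "Uvar = [:[:0, 1:]:]"
definition Vvar :: "int poly poly" where "Vvar = [:0, 1:]"

definition subst_uv :: "int poly \<Rightarrow> int poly poly" where
  "subst_uv g = poly (map_poly (\<lambda>c. [:[:c:]:]) g) (Uvar * Vvar)"

text \<open>u^e g(u^{-1} v), written out coefficientwise (a polynomial since deg g <= e in all uses).\<close>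
definition homog :: "nat \<Rightarrow> int poly \<Rightarrow> int poly poly" where
  "homog e g = (\<Sum>i\<le>degree g. [:[:coeff g i:]:] * Uvar ^ (e - i) * Vvar ^ i)"

text \<open>B([x,y];u,v): sum_{x<=z<=y} B([x,z]) u^{rho y - rho z} G([z,y],u^{-1}v) = G([x,y],uv).\<close>
fun Bf :: "'a::order set \<Rightarrow> nat \<Rightarrow> 'a \<Rightarrow> 'a \<Rightarrow> int poly poly" where
  "Bf P 0 x y = (if x = y then 1 else 0)"
| "Bf P (Suc n) x y = (if x = y then 1 else if x < y then
      subst_uv (Gpol P x y)
      - (\<Sum>z\<in>{z\<in>P. x \<le> z \<and> z < y}. Bf P n x z * homog (rho P y - rho P z) (Gpol P z y))
    else 0)"

definition Bpol :: "'a::order set \<Rightarrow> 'a \<Rightarrow> 'a \<Rightarrow> int poly poly" where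
  "Bpol P x y = Bf P (card P) x y"

definition evalB :: "int poly poly \<Rightarrow> real \<Rightarrow> real \<Rightarrow> real" where
  "evalB p u v = poly (map_poly (\<lambda>q. poly (map_poly of_int q) u) p) v"

end

theory Submission
  imports Defs
begin

text \<open>
  For an Eulerian interval [x,y] of rank e the g-polynomial satisfies the
  Kazhdan-Lusztig-Stanley relation t^e G([x,y], 1/t) = sum_{x<=z<=y} (t-1)^(rho z - rho x) G([z,y], t):
  inductively, (t - 1) H([x,y], t) is antipalindromic of degree e (this is where
  mu(x,z) = (-1)^(rho z - rho x) enters), and G is its lower half.

  Substituting t = uv, resp. t = v/u, both sides of the relation defining B, namely
  sum_z B'([x,z]) u^(rho y - rho z) G([z,y], v/u) and G([x,y], uv), satisfy the same inversion law
  (uv)^e F(x)(1/u, 1/v) = sum_z (uv - 1)^(rho z - rho x) F(z)(u, v); for the left-hand side this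
  is hypothesis (c) after exchanging two summations. By induction on the interval their
  difference is self-reciprocal, and as its v-degree is below e/2 it vanishes. So B' obeys
  the recursion that defines B.
\<close>

section \<open>Evaluating integer polynomials at real points\<close>

lemma map_poly_add:
  assumes "f 0 = 0" "\<And>a b. f (a + b) = f a + f b"
  shows "map_poly f (p + q) = map_poly f p + map_poly f q"
  by (intro poly_eqI) (simp add: coeff_map_poly assms)

lemma map_poly_diff:
  assumes "f 0 = 0" "\<And>a b. f (a - b) = f a - f b"
  shows "map_poly f (p - q) = map_poly f p - map_poly f q"
  by (intro poly_eqI) (simp add: coeff_map_poly assms)

lemma map_poly_mult:
  fixes f :: "'a::comm_semiring_0 \<Rightarrow> 'b::comm_semiring_0"
  assumes "f 0 = 0" "\<And>a b. f (a + b) = f a + f b" "\<And>a b. f (a * b) = f a * f b"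
  shows "map_poly f (p * q) = map_poly f p * map_poly f q"
proof (induction p)
  case (pCons a p)
  then show ?case
    by (simp add: map_poly_add map_poly_smult map_poly_pCons assms)
qed simp

definition rpoly :: "int poly \<Rightarrow> real \<Rightarrow> real" where
  "rpoly p x = poly (map_poly of_int p) x"

lemma rpoly_add [simp]: "rpoly (p + q) x = rpoly p x + rpoly q x"
  and rpoly_diff [simp]: "rpoly (p - q) x = rpoly p x - rpoly q x"
  and rpoly_mult [simp]: "rpoly (p * q) x = rpoly p x * rpoly q x"
  and rpoly_pCons [simp]: "rpoly (pCons a p) x = of_int a + x * rpoly p x"
  and rpoly_monom [simp]: "rpoly (monom a n) x = of_int a * x ^ n"
  by (simp_all add: rpoly_def map_poly_add map_poly_diff map_poly_mult map_poly_pCons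
      map_poly_monom poly_monom)

lemma rpoly_0 [simp]: "rpoly 0 x = 0"
  and rpoly_1 [simp]: "rpoly 1 x = 1"
  by (simp_all add: rpoly_def)

lemma rpoly_uminus [simp]: "rpoly (- p) x = - rpoly p x"
  using rpoly_diff[of 0 p] by simp

lemma rpoly_sum [simp]: "rpoly (sum f A) x = (\<Sum>a\<in>A. rpoly (f a) x)"
  by (induction A rule: infinite_finite_induct) auto

lemma rpoly_power [simp]: "rpoly (p ^ n) x = rpoly p x ^ n"
  by (induction n) auto

lemma real_poly_eqI_nonzero:
  fixes p q :: "real poly"
  assumes "\<And>x. x \<noteq> 0 \<Longrightarrow> poly p x = poly q x"
  shows "p = q"
proof (rule ccontr)
  assume "p \<noteq> q"
  then have "finite {x. poly (p - q) x = 0}"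
    by (intro poly_roots_finite) simp
  moreover have "- {0} \<subseteq> {x. poly (p - q) x = 0}"
    using assms by auto
  ultimately have "finite (insert 0 (- {0::real}))"
    by (simp add: finite_subset)
  then show False
    by (simp add: insert_absorb infinite_UNIV_char_0 flip: Compl_eq_Diff_UNIV)
qed

lemma int_poly_eqI_rpoly:
  assumes "\<And>x. x \<noteq> 0 \<Longrightarrow> rpoly p x = rpoly q x"
  shows "p = q"
proof -
  have "map_poly (of_int :: int \<Rightarrow> real) p = map_poly of_int q"
    using assms by (intro real_poly_eqI_nonzero) (simp add: rpoly_def)
  then have "coeff p n = coeff q n" for n
    by (metis coeff_map_poly of_int_0 of_int_eq_iff)
  then show ?thesis
    by (simp add: poly_eq_iff)
qed

lemma evalB_rpoly: "evalB p u v = poly (map_poly (\<lambda>q. rpoly q u) p) v"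
  by (simp add: evalB_def rpoly_def)

lemma evalB_add [simp]: "evalB (p + q) u v = evalB p u v + evalB q u v"
  and evalB_diff [simp]: "evalB (p - q) u v = evalB p u v - evalB q u v"
  and evalB_mult [simp]: "evalB (p * q) u v = evalB p u v * evalB q u v"
  and evalB_0 [simp]: "evalB 0 u v = 0"
  and evalB_1 [simp]: "evalB 1 u v = 1"
  by (simp_all add: evalB_rpoly map_poly_add map_poly_diff map_poly_mult)

lemma evalB_sum [simp]: "evalB (sum f A) u v = (\<Sum>a\<in>A. evalB (f a) u v)"
  by (induction A rule: infinite_finite_induct) auto

lemma evalB_power [simp]: "evalB (p ^ n) u v = evalB p u v ^ n"
  by (induction n) auto

lemma evalB_const [simp]: "evalB [:[:a:]:] u v = of_int a"
  and evalB_Uvar [simp]: "evalB Uvar u v = u"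
  and evalB_Vvar [simp]: "evalB Vvar u v = v"
  by (simp_all add: evalB_rpoly Uvar_def Vvar_def map_poly_pCons)

lemma subst_uv_0 [simp]: "subst_uv 0 = 0"
  by (simp add: subst_uv_def)

lemma subst_uv_1 [simp]: "subst_uv 1 = 1"
  by (simp add: subst_uv_def one_pCons map_poly_pCons)

lemma subst_uv_pCons: "subst_uv (pCons a g) = [:[:a:]:] + Uvar * Vvar * subst_uv g"
  by (simp add: subst_uv_def map_poly_pCons)

lemma evalB_subst_uv: "evalB (subst_uv g) u v = rpoly g (u * v)"
  by (induction g) (simp_all add: subst_uv_pCons)

lemma degree_subst_uv: "degree (subst_uv g) \<le> degree g"
proof (induction g)
  case (pCons a g)
  have "degree (Uvar * Vvar * subst_uv g) \<le> 1 + degree g"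
    using degree_mult_le[of "Uvar * Vvar" "subst_uv g"] pCons.IH by (simp add: Uvar_def Vvar_def)
  then show ?case
    by (auto simp: subst_uv_pCons intro: degree_add_le)
qed simp

lemma homog_0_1 [simp]: "homog 0 1 = 1"
  by (simp add: homog_def pCons_one)

lemma evalB_smult [simp]: "evalB (smult c p) u v = rpoly c u * evalB p u v"
  by (simp add: evalB_rpoly map_poly_smult)

lemma degree_homog: "degree (homog e g) \<le> degree g"
  unfolding homog_def
proof (intro degree_sum_le)
  fix i assume "i \<in> {..degree g}"
  have "degree ([:[:coeff g i:]:] * Uvar ^ (e - i)) = 0"
    using degree_mult_le[of "[:[:coeff g i:]:]" "Uvar ^ (e - i)"] degree_power_le[of Uvar "e - i"]
    by (simp add: Uvar_def)
  then have "degree ([:[:coeff g i:]:] * Uvar ^ (e - i) * Vvar ^ i) \<le> i"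
    using degree_mult_le[of "[:[:coeff g i:]:] * Uvar ^ (e - i)" "Vvar ^ i"] degree_power_le[of Vvar i]
    by (simp add: Vvar_def)
  then show "degree ([:[:coeff g i:]:] * Uvar ^ (e - i) * Vvar ^ i) \<le> degree g"
    using \<open>i \<in> {..degree g}\<close> by simp
qed simp

lemma rpoly_altdef: "rpoly g x = (\<Sum>i\<le>degree g. of_int (coeff g i) * x ^ i)"
  by (subst (1) poly_as_sum_of_monoms[symmetric]) (simp del: poly_as_sum_of_monoms)

lemma evalB_homog:
  assumes "degree g \<le> e" "u \<noteq> 0"
  shows "evalB (homog e g) u v = u ^ e * rpoly g (v / u)"
proof -
  have "u ^ (e - i) * v ^ i = u ^ e * (v / u) ^ i" if "i \<le> degree g" for i
    using that assms by (simp add: power_diff power_divide)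
  then show ?thesis
    by (simp add: homog_def rpoly_altdef sum_distrib_left mult_ac)
qed

section \<open>Reflection and truncation\<close>

text \<open>Unlike \<^const>\<open>reflect_poly\<close>, this reflects about a prescribed degree \<open>e \<ge> degree p\<close>.\<close>
definition reflect_poly_deg :: "nat \<Rightarrow> 'a::comm_monoid_add poly \<Rightarrow> 'a poly" where
  "reflect_poly_deg e p = (\<Sum>i\<le>e. monom (coeff p i) (e - i))"

lemma coeff_reflect_poly_deg:
  "coeff (reflect_poly_deg e p) k = (if k \<le> e then coeff p (e - k) else 0)"
proof -
  have "coeff (reflect_poly_deg e p) k = (\<Sum>i\<le>e. if e - i = k then coeff p i else 0)"
    by (simp add: reflect_poly_deg_def coeff_sum coeff_monom)
  also have "\<dots> = (\<Sum>i\<le>e. if i = e - k \<and> k \<le> e then coeff p i else 0)"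
    by (intro sum.cong) auto
  finally show ?thesis
    by (simp add: sum.delta)
qed

lemma map_poly_reflect_poly_deg:
  assumes "f 0 = 0"
  shows "map_poly f (reflect_poly_deg e p) = reflect_poly_deg e (map_poly f p)"
  by (intro poly_eqI) (simp add: coeff_map_poly coeff_reflect_poly_deg assms)

lemma poly_reflect_poly_deg:
  fixes p :: "'a::field poly"
  assumes "degree p \<le> e" "x \<noteq> 0"
  shows "poly (reflect_poly_deg e p) x = x ^ e * poly p (1 / x)"
proof -
  have "poly p (1 / x) = (\<Sum>i\<le>e. coeff p i * (1 / x) ^ i)"
    by (subst poly_as_sum_of_monoms'[OF assms(1), symmetric]) (simp add: poly_sum poly_monom)
  moreover have "x ^ (e - i) = x ^ e * (1 / x) ^ i" if "i \<le> e" for i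
    using that assms(2) by (simp add: power_diff power_one_over)
  ultimately show ?thesis
    by (simp add: reflect_poly_deg_def poly_sum poly_monom sum_distrib_left mult_ac)
qed

lemma rpoly_reflect_poly_deg:
  assumes "degree p \<le> e" "x \<noteq> 0"
  shows "rpoly (reflect_poly_deg e p) x = x ^ e * rpoly p (1 / x)"
  using poly_reflect_poly_deg[OF order_trans[OF map_poly_degree_leq assms(1)] assms(2)]
  by (simp add: rpoly_def map_poly_reflect_poly_deg)

lemma trunc_half_0 [simp]: "trunc_half e 0 = 0"
  by (simp add: trunc_half_def)

lemma coeff_trunc_half: "coeff (trunc_half e p) k = (if 2 * k < e then coeff p k else 0)"
proof -
  have "coeff (trunc_half e p) k = (\<Sum>i\<in>{i. i < e \<and> 2 * i < e}. if i = k then coeff p i else 0)"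
    by (simp add: trunc_half_def coeff_sum coeff_monom)
  then show ?thesis
    by (simp add: sum.delta')
qed

lemma degree_trunc_half:
  assumes "0 < e"
  shows "2 * degree (trunc_half e p) < e"
proof (cases "trunc_half e p = 0")
  case False
  then have "coeff (trunc_half e p) (degree (trunc_half e p)) \<noteq> 0"
    by simp
  then show ?thesis
    by (simp add: coeff_trunc_half split: if_splits)
qed (simp add: assms)

lemma reflect_trunc_half:
  assumes deg: "degree R \<le> e" and anti: "reflect_poly_deg e R = - R"
  shows "reflect_poly_deg e (trunc_half e (- R)) = trunc_half e (- R) + R"
proof (rule poly_eqI)
  fix j
  have sym: "coeff R (e - j) = - coeff R j" if "j \<le> e" for j
    using arg_cong[OF anti, of "\<lambda>p. coeff p j"] that by (simp add: coeff_reflect_poly_deg)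
  show "coeff (reflect_poly_deg e (trunc_half e (- R))) j = coeff (trunc_half e (- R) + R) j"
  proof (cases "j \<le> e")
    case True
    then consider "2 * j < e" | "2 * j = e" | "e < 2 * j"
      by linarith
    then show ?thesis
      using True sym[OF True] by cases (auto simp: coeff_reflect_poly_deg coeff_trunc_half)
  next
    case False
    then show ?thesis
      using deg by (simp add: coeff_reflect_poly_deg coeff_trunc_half coeff_eq_0)
  qed
qed

lemma self_reciprocal_eq_0:
  fixes p :: "int poly poly"
  assumes deg: "2 * degree p < e"
    and recip: "\<And>u v. u \<noteq> 0 \<Longrightarrow> v \<noteq> 0 \<Longrightarrow> (u * v) ^ e * evalB p (1 / u) (1 / v) = evalB p u v"
  shows "p = 0"
proof -
  define q where "q u = map_poly (\<lambda>c. rpoly c u) p" for u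
  have deg_q: "degree (q u) \<le> degree p" for u
    unfolding q_def by (rule map_poly_degree_leq)
  have "rpoly (coeff p k) u = 0" if "k \<le> degree p" "u \<noteq> 0" for k u
  proof -
    txt \<open>As a polynomial in \<open>v\<close>, the reciprocal side is a reflection about degree \<open>e\<close>,
      so all its terms have degree \<open>\<ge> e - degree p > degree p\<close>.\<close>
    have "q u = smult (u ^ e) (reflect_poly_deg e (q (1 / u)))"
    proof (rule real_poly_eqI_nonzero)
      fix v :: real assume "v \<noteq> 0"
      have "poly (reflect_poly_deg e (q (1 / u))) v = v ^ e * poly (q (1 / u)) (1 / v)"
        using deg_q[of "1 / u"] deg \<open>v \<noteq> 0\<close> by (intro poly_reflect_poly_deg) auto
      then show "poly (q u) v = poly (smult (u ^ e) (reflect_poly_deg e (q (1 / u)))) v"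
        using recip[OF \<open>u \<noteq> 0\<close> \<open>v \<noteq> 0\<close>] by (simp add: q_def evalB_rpoly power_mult_distrib)
    qed
    moreover have "coeff (q (1 / u)) (e - k) = 0"
      using deg_q[of "1 / u"] deg that(1) by (intro coeff_eq_0) linarith
    ultimately have "coeff (q u) k = 0"
      using deg that(1) by (simp add: coeff_reflect_poly_deg)
    then show ?thesis
      by (simp add: q_def coeff_map_poly)
  qed
  then have "coeff p k = 0" for k
    using int_poly_eqI_rpoly[of "coeff p k" 0] coeff_eq_0[of p k] by (cases "k \<le> degree p") auto
  then show ?thesis
    by (simp add: poly_eq_iff)
qed

section \<open>Intervals, ranks and the defining recursions\<close>

abbreviation Icc_on :: "'a::order set \<Rightarrow> 'a \<Rightarrow> 'a \<Rightarrow> 'a set" where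
  "Icc_on P x y \<equiv> {z\<in>P. x \<le> z \<and> z \<le> y}"

abbreviation Ioc_on :: "'a::order set \<Rightarrow> 'a \<Rightarrow> 'a \<Rightarrow> 'a set" where
  "Ioc_on P x y \<equiv> {z\<in>P. x < z \<and> z \<le> y}"

abbreviation Ico_on :: "'a::order set \<Rightarrow> 'a \<Rightarrow> 'a \<Rightarrow> 'a set" where
  "Ico_on P x y \<equiv> {z\<in>P. x \<le> z \<and> z < y}"

abbreviation rk :: "'a::order set \<Rightarrow> 'a \<Rightarrow> 'a \<Rightarrow> nat" where
  "rk P x y \<equiv> rho P y - rho P x"

lemma card_Ioc_on_less:
  assumes "finite P" "z \<in> Ioc_on P x y"
  shows "card (Ioc_on P z y) < card (Ioc_on P x y)"
proof -
  have "Ioc_on P z y \<subset> Ioc_on P x y"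
    using assms(2) by (auto intro: order.strict_trans)
  then show ?thesis
    using assms(1) by (intro psubset_card_mono) auto
qed

lemma card_Ico_on_less:
  assumes "finite P" "z \<in> Ico_on P x y"
  shows "card (Ico_on P x z) < card (Ico_on P x y)"
proof -
  have "Ico_on P x z \<subset> Ico_on P x y"
    using assms(2) by (auto intro: order.strict_trans2)
  then show ?thesis
    using assms(1) by (intro psubset_card_mono) auto
qed

lemma rho_less:
  assumes fin: "finite P" and "x \<in> P" "y \<in> P" "x < y"
  shows "rho P x < rho P y"
proof -
  define chains where "chains w = {C. is_chain {z\<in>P. z \<le> w} C}" for w
  have "finite (chains w)" for w
    by (rule finite_subset[of _ "Pow P"]) (auto simp: chains_def is_chain_def fin)
  then have max_ge: "card C \<le> Max (card ` chains w)" if "C \<in> chains w" for C w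
    using that by simp
  have "{x} \<in> chains x"
    using \<open>x \<in> P\<close> by (auto simp: chains_def is_chain_def)
  then obtain C where C: "C \<in> chains x" "card C = Max (card ` chains x)"
    using Max_in[of "card ` chains x"] \<open>finite (chains x)\<close> by fastforce
  have "1 \<le> card C"
    using max_ge[OF \<open>{x} \<in> chains x\<close>] C(2) by simp
  have "finite C" "y \<notin> C"
    using C(1) \<open>x < y\<close> finite_subset[OF _ fin] by (auto simp: chains_def is_chain_def)
  moreover have "insert y C \<in> chains y"
    using C(1) \<open>x < y\<close> \<open>y \<in> P\<close> by (auto simp: chains_def is_chain_def intro: order.trans)
  ultimately have "card C + 1 \<le> Max (card ` chains y)"
    using max_ge by fastforce
  then show ?thesis
    using C(2) \<open>1 \<le> card C\<close> by (simp add: rho_def chains_def)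
qed

lemma rho_le: "finite P \<Longrightarrow> x \<in> P \<Longrightarrow> y \<in> P \<Longrightarrow> x \<le> y \<Longrightarrow> rho P x \<le> rho P y"
  using rho_less[of P x y] by (auto simp: le_less)

lemma rk_add:
  assumes "finite P" "x \<in> P" "z \<in> P" "y \<in> P" "x \<le> z" "z \<le> y"
  shows "rk P x y = rk P x z + rk P z y"
  using rho_le[of P x z] rho_le[of P z y] assms by simp

text \<open>Fuel beyond the size of the relevant interval does not change \<^const>\<open>muf\<close>,
  \<^const>\<open>Gf\<close> and \<^const>\<open>Bf\<close>; this turns their defining equations into recursions for
  \<^const>\<open>mobius\<close>, \<^const>\<open>Gpol\<close> and \<^const>\<open>Bpol\<close>.\<close>

lemma muf_Suc:
  assumes "finite P"
  shows "card (Ico_on P x y) \<le> n \<Longrightarrow> muf P (Suc n) x y = muf P n x y"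
proof (induction n arbitrary: y)
  case 0
  then have "Ico_on P x y = {}"
    using assms by simp
  then show ?case
    by (simp only: muf.simps sum.empty) simp
next
  case (Suc n)
  have "muf P (Suc n) x z = muf P n x z" if "z \<in> Ico_on P x y" for z
    using Suc.IH card_Ico_on_less[OF \<open>finite P\<close> that] Suc.prems by simp
  then show ?case
    by simp
qed

lemma mobius_rec:
  assumes "finite P" "x < y"
  shows "mobius P x y = - (\<Sum>z\<in>Ico_on P x y. mobius P x z)"
proof -
  have "card (Ico_on P x y) \<le> card P"
    using assms(1) by (intro card_mono) auto
  then have "muf P (Suc (card P)) x y = muf P (card P) x y"
    by (rule muf_Suc[OF assms(1)])
  with assms(2) show ?thesis
    by (simp add: mobius_def less_imp_neq)
qed

lemma Gf_Suc:
  assumes "finite P"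
  shows "card (Ioc_on P x y) \<le> n \<Longrightarrow> Gf P (Suc n) x y = Gf P n x y"
proof (induction n arbitrary: x)
  case 0
  then have "Ioc_on P x y = {}"
    using assms by simp
  then show ?case
    by (simp only: Gf.simps sum.empty) simp
next
  case (Suc n)
  have "Gf P (Suc n) z y = Gf P n z y" if "z \<in> Ioc_on P x y" for z
    using Suc.IH card_Ioc_on_less[OF \<open>finite P\<close> that] Suc.prems by simp
  then show ?case
    by simp
qed

lemma Gpol_refl [simp]: "Gpol P x x = 1"
  by (cases "card P") (auto simp: Gpol_def)

lemma Gpol_rec:
  assumes "finite P" "x \<noteq> y"
  shows "Gpol P x y = trunc_half (rk P x y)
    ([:1, -1:] * (\<Sum>z\<in>Ioc_on P x y. [:-1, 1:] ^ (rk P x z - 1) * Gpol P z y))"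
proof -
  have "card (Ioc_on P x y) \<le> card P"
    using assms(1) by (intro card_mono) auto
  then have "Gf P (Suc (card P)) x y = Gf P (card P) x y"
    by (rule Gf_Suc[OF assms(1)])
  with assms(2) show ?thesis
    by (simp add: Gpol_def)
qed

lemma Bf_Suc:
  assumes "finite P" "x \<in> P"
  shows "card (Ico_on P x y) \<le> n \<Longrightarrow> Bf P (Suc n) x y = Bf P n x y"
proof (induction n arbitrary: y)
  case 0
  then have "Ico_on P x y = {}"
    using assms(1) by simp
  then show ?case
    using assms(2) by (simp only: Bf.simps sum.empty) auto
next
  case (Suc n)
  have "Bf P (Suc n) x z = Bf P n x z" if "z \<in> Ico_on P x y" for z
    using Suc.IH card_Ico_on_less[OF \<open>finite P\<close> that] Suc.prems by simp
  then show ?case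
    by simp
qed

lemma Bpol_refl [simp]: "Bpol P x x = 1"
  by (cases "card P") (auto simp: Bpol_def)

lemma Bpol_rec:
  assumes "finite P" "x \<in> P" "x < y"
  shows "Bpol P x y = subst_uv (Gpol P x y)
    - (\<Sum>z\<in>Ico_on P x y. Bpol P x z * homog (rk P z y) (Gpol P z y))"
proof -
  have "card (Ico_on P x y) \<le> card P"
    using assms(1) by (intro card_mono) auto
  then have "Bf P (Suc (card P)) x y = Bf P (card P) x y"
    by (rule Bf_Suc[OF assms(1,2)])
  with assms(3) show ?thesis
    by (simp add: Bpol_def less_imp_neq)
qed

lemma eulerian_sum_Ioc_sign:
  assumes eul: "eulerian P" and "x \<in> P" "y \<in> P" "x < y"
  shows "(\<Sum>z\<in>Ioc_on P x y. (-1::'b::ring_1) ^ rk P x z) = -1"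
proof -
  have fin: "finite P"
    using eul by (simp add: eulerian_def)
  have mob: "mobius P x z = (-1) ^ rk P x z" if "z \<in> Icc_on P x y" for z
    using eul that \<open>x \<in> P\<close> by (simp add: eulerian_def)
  have Icc_y: "Icc_on P x y = insert y (Ico_on P x y)"
    and Icc_x: "Icc_on P x y = insert x (Ioc_on P x y)"
    using assms by auto
  have "(\<Sum>z\<in>Icc_on P x y. mobius P x z) = 0"
    unfolding Icc_y using fin mobius_rec[OF fin \<open>x < y\<close>] by simp
  moreover have "(\<Sum>z\<in>Icc_on P x y. mobius P x z) = 1 + (\<Sum>z\<in>Ioc_on P x y. mobius P x z)"
    unfolding Icc_x using fin mob[of x] assms by simp
  ultimately have "(\<Sum>z\<in>Ioc_on P x y. mobius P x z) = -1"
    by simp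
  moreover have "(\<Sum>z\<in>Ioc_on P x y. mobius P x z) = (\<Sum>z\<in>Ioc_on P x y. (-1::int) ^ rk P x z)"
    using mob by (intro sum.cong) auto
  ultimately have "(\<Sum>z\<in>Ioc_on P x y. (-1::int) ^ rk P x z) = -1"
    by simp
  then have "(of_int (\<Sum>z\<in>Ioc_on P x y. (-1::int) ^ rk P x z) :: 'b) = of_int (-1)"
    by (rule arg_cong)
  then show ?thesis
    by simp
qed

lemma sum_Icc_on_swap:
  assumes "finite P"
  shows "(\<Sum>z\<in>Icc_on P x y. \<Sum>w\<in>Icc_on P z y. f z w) = (\<Sum>w\<in>Icc_on P x y. \<Sum>z\<in>Icc_on P x w. f z w)"
proof -
  have "(\<Sum>z\<in>Icc_on P x y. \<Sum>w\<in>Icc_on P z y. f z w)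
      = (\<Sum>z\<in>Icc_on P x y. \<Sum>w\<in>{w \<in> Icc_on P x y. z \<le> w}. f z w)"
    by (intro sum.cong refl) (auto intro: order.trans)
  also have "\<dots> = (\<Sum>w\<in>Icc_on P x y. \<Sum>z\<in>{z \<in> Icc_on P x y. z \<le> w}. f z w)"
    using assms by (intro sum.swap_restrict) auto
  also have "\<dots> = (\<Sum>w\<in>Icc_on P x y. \<Sum>z\<in>Icc_on P x w. f z w)"
    by (intro sum.cong refl) (auto intro: order.trans)
  finally show ?thesis .
qed

lemma sum_Ioc_on_swap:
  assumes "finite P"
  shows "(\<Sum>z\<in>Ioc_on P x y. \<Sum>w\<in>Icc_on P z y. f z w) = (\<Sum>w\<in>Ioc_on P x y. \<Sum>z\<in>Ioc_on P x w. f z w)"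
proof -
  have "(\<Sum>z\<in>Ioc_on P x y. \<Sum>w\<in>Icc_on P z y. f z w)
      = (\<Sum>z\<in>Ioc_on P x y. \<Sum>w\<in>{w \<in> Ioc_on P x y. z \<le> w}. f z w)"
    by (intro sum.cong refl) (auto intro: order.strict_trans2)
  also have "\<dots> = (\<Sum>w\<in>Ioc_on P x y. \<Sum>z\<in>{z \<in> Ioc_on P x y. z \<le> w}. f z w)"
    using assms by (intro sum.swap_restrict) auto
  also have "\<dots> = (\<Sum>w\<in>Ioc_on P x y. \<Sum>z\<in>Ioc_on P x w. f z w)"
    by (intro sum.cong refl) (auto intro: order.trans)
  finally show ?thesis .
qed

section \<open>The Kazhdan-Lusztig-Stanley relation for G\<close>

lemma degree_Gpol_less:
  assumes "finite P" "x \<in> P" "y \<in> P" "x < y"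
  shows "2 * degree (Gpol P x y) < rk P x y"
  using Gpol_rec[of P x y] degree_trunc_half rho_less[of P x y] assms by simp

lemma degree_Gpol_half_le:
  assumes "finite P" "x \<in> P" "y \<in> P" "x \<le> y"
  shows "2 * degree (Gpol P x y) \<le> rk P x y"
  using degree_Gpol_less[of P x y] assms le_less[of x y] by (cases "x = y") auto

lemma degree_Gpol_le:
  assumes "finite P" "x \<in> P" "y \<in> P" "x \<le> y"
  shows "degree (Gpol P x y) \<le> rk P x y"
  using degree_Gpol_half_le[OF assms] by linarith

text \<open>\<open>Rpol P x y\<close> is \<open>(t - 1) H([x,y], t)\<close>.\<close>
definition Rpol :: "'a::order set \<Rightarrow> 'a \<Rightarrow> 'a \<Rightarrow> int poly" where
  "Rpol P x y = (\<Sum>z\<in>Ioc_on P x y. [:-1, 1:] ^ rk P x z * Gpol P z y)"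

lemma Gpol_eq_trunc_half_Rpol:
  assumes "finite P" "x \<in> P" "x \<noteq> y"
  shows "Gpol P x y = trunc_half (rk P x y) (- Rpol P x y)"
proof -
  have "[:1, -1:] * ([:-1, 1:] ^ (rk P x z - 1) * Gpol P z y) = - ([:-1, 1:] ^ rk P x z * Gpol P z y)"
    if "z \<in> Ioc_on P x y" for z
  proof -
    have k: "rk P x z = Suc (rk P x z - 1)"
      using rho_less[of P x z] that assms by simp
    have "[:1, -1:] = - [:-1, 1::int:]"
      by simp
    then have "[:1, -1:] * [:-1, 1:] ^ (rk P x z - 1) = - ([:-1, 1::int:] ^ rk P x z)"
      by (subst (2) k) (simp only: power_Suc mult_minus_left)
    then show ?thesis
      by (simp only: mult.assoc[symmetric] mult_minus_left)
  qed
  then show ?thesis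
    using Gpol_rec[OF assms(1,3)] by (simp add: Rpol_def sum_distrib_left sum_negf)
qed

lemma degree_Rpol:
  assumes "finite P" "x \<in> P" "y \<in> P"
  shows "degree (Rpol P x y) \<le> rk P x y"
  unfolding Rpol_def
proof (intro degree_sum_le)
  fix z assume z: "z \<in> Ioc_on P x y"
  have "degree ([:-1, 1:] ^ rk P x z * Gpol P z y) \<le> rk P x z + rk P z y"
    using degree_mult_le[of "[:-1, 1::int:] ^ rk P x z" "Gpol P z y"]
      degree_power_le[of "[:-1, 1::int:]" "rk P x z"] degree_Gpol_le[of P z y] z assms
    by simp
  then show "degree ([:-1, 1:] ^ rk P x z * Gpol P z y) \<le> rk P x y"
    using rk_add[of P x z y] z assms by (simp add: less_imp_le)
qed (use assms in simp)

lemma rpoly_Rpol_inverse: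
  assumes "finite P" "x \<in> P" "y \<in> P" "s \<noteq> 0"
  shows "s ^ rk P x y * rpoly (Rpol P x y) (1 / s)
    = (\<Sum>z\<in>Ioc_on P x y. (1 - s) ^ rk P x z * (s ^ rk P z y * rpoly (Gpol P z y) (1 / s)))"
  unfolding Rpol_def rpoly_sum sum_distrib_left
proof (intro sum.cong refl)
  fix z assume z: "z \<in> Ioc_on P x y"
  have rk: "rk P x y = rk P x z + rk P z y"
    using rk_add[of P x z y] z assms by (simp add: less_imp_le)
  have inv: "s ^ rk P x z * rpoly [:-1, 1:] (1 / s) ^ rk P x z = (1 - s) ^ rk P x z"
    using \<open>s \<noteq> 0\<close> by (simp add: field_simps flip: power_mult_distrib)
  have "s ^ rk P x y * rpoly ([:-1, 1:] ^ rk P x z * Gpol P z y) (1 / s)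
      = (s ^ rk P x z * rpoly [:-1, 1:] (1 / s) ^ rk P x z) * (s ^ rk P z y * rpoly (Gpol P z y) (1 / s))"
    unfolding rk power_add rpoly_mult rpoly_power by (simp only: mult_ac)
  then show "s ^ rk P x y * rpoly ([:-1, 1:] ^ rk P x z * Gpol P z y) (1 / s)
      = (1 - s) ^ rk P x z * (s ^ rk P z y * rpoly (Gpol P z y) (1 / s))"
    unfolding inv .
qed

lemma rpoly_Rpol_reciprocal:
  assumes eul: "eulerian P" and "x \<in> P" "y \<in> P" "s \<noteq> 0"
    and G_recip: "\<And>z. z \<in> Ioc_on P x y \<Longrightarrow> s ^ rk P z y * rpoly (Gpol P z y) (1 / s)
        = (\<Sum>w\<in>Icc_on P z y. (s - 1) ^ rk P z w * rpoly (Gpol P w y) s)"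
  shows "s ^ rk P x y * rpoly (Rpol P x y) (1 / s) = - rpoly (Rpol P x y) s"
proof -
  have fin: "finite P"
    using eul by (simp add: eulerian_def)
  define g where "g w = (s - 1) ^ rk P x w * rpoly (Gpol P w y) s" for w
  have "s ^ rk P x y * rpoly (Rpol P x y) (1 / s)
      = (\<Sum>z\<in>Ioc_on P x y. \<Sum>w\<in>Icc_on P z y. (-1) ^ rk P x z * g w)"
    unfolding rpoly_Rpol_inverse[OF fin assms(2-4)]
  proof (intro sum.cong refl)
    fix z assume z: "z \<in> Ioc_on P x y"
    have "(1 - s) ^ rk P x z * ((s - 1) ^ rk P z w * rpoly (Gpol P w y) s) = (-1) ^ rk P x z * g w"
      if "w \<in> Icc_on P z y" for w
    proof -
      have "rk P x w = rk P x z + rk P z w"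
        using rk_add[of P x z w] z that assms fin by (simp add: less_imp_le)
      moreover have "(1 - s) ^ rk P x z = (-1) ^ rk P x z * (s - 1) ^ rk P x z"
        by (simp flip: power_mult_distrib)
      ultimately show ?thesis
        by (simp add: g_def power_add mult_ac)
    qed
    then show "(1 - s) ^ rk P x z * (s ^ rk P z y * rpoly (Gpol P z y) (1 / s))
        = (\<Sum>w\<in>Icc_on P z y. (-1) ^ rk P x z * g w)"
      by (simp add: G_recip[OF z] sum_distrib_left)
  qed
  also have "\<dots> = (\<Sum>w\<in>Ioc_on P x y. (\<Sum>z\<in>Ioc_on P x w. (-1) ^ rk P x z) * g w)"
    unfolding sum_Ioc_on_swap[OF fin] sum_distrib_right ..
  also have "\<dots> = (\<Sum>w\<in>Ioc_on P x y. - g w)"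
    by (intro sum.cong refl) (simp add: eulerian_sum_Ioc_sign[OF eul \<open>x \<in> P\<close>])
  also have "\<dots> = - rpoly (Rpol P x y) s"
    by (simp add: Rpol_def g_def sum_negf)
  finally show ?thesis .
qed

lemma Gpol_reciprocal_step:
  assumes eul: "eulerian P" and "x \<in> P" "y \<in> P" "x < y" "s \<noteq> 0"
    and G_recip: "\<And>z s. z \<in> Ioc_on P x y \<Longrightarrow> s \<noteq> 0 \<Longrightarrow> s ^ rk P z y * rpoly (Gpol P z y) (1 / s)
        = (\<Sum>w\<in>Icc_on P z y. (s - 1) ^ rk P z w * rpoly (Gpol P w y) s)"
  shows "s ^ rk P x y * rpoly (Gpol P x y) (1 / s)
    = (\<Sum>z\<in>Icc_on P x y. (s - 1) ^ rk P x z * rpoly (Gpol P z y) s)"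
proof -
  have fin: "finite P"
    using eul by (simp add: eulerian_def)
  define e where "e = rk P x y"
  define R where "R = Rpol P x y"
  have deg_R: "degree R \<le> e"
    unfolding R_def e_def using fin \<open>x \<in> P\<close> \<open>y \<in> P\<close> by (rule degree_Rpol)
  have "rpoly (reflect_poly_deg e R) s' = rpoly (- R) s'" if "s' \<noteq> 0" for s'
    using rpoly_reflect_poly_deg[OF deg_R that]
      rpoly_Rpol_reciprocal[OF eul \<open>x \<in> P\<close> \<open>y \<in> P\<close> that G_recip[OF _ that]]
    by (simp add: R_def e_def)
  then have "reflect_poly_deg e R = - R"
    by (rule int_poly_eqI_rpoly)
  moreover have "Gpol P x y = trunc_half e (- R)"
    unfolding R_def e_def using fin \<open>x \<in> P\<close> less_imp_neq[OF \<open>x < y\<close>] by (rule Gpol_eq_trunc_half_Rpol)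
  ultimately have "reflect_poly_deg e (Gpol P x y) = Gpol P x y + R"
    using reflect_trunc_half[OF deg_R] by simp
  moreover have "degree (Gpol P x y) \<le> e"
    unfolding e_def using fin \<open>x \<in> P\<close> \<open>y \<in> P\<close> less_imp_le[OF \<open>x < y\<close>] by (rule degree_Gpol_le)
  ultimately have "s ^ e * rpoly (Gpol P x y) (1 / s) = rpoly (Gpol P x y) s + rpoly R s"
    using rpoly_reflect_poly_deg[of "Gpol P x y" e s] \<open>s \<noteq> 0\<close> by simp
  moreover have "Icc_on P x y = insert x (Ioc_on P x y)"
    using \<open>x \<in> P\<close> \<open>x < y\<close> by auto
  ultimately show ?thesis
    using fin by (simp add: e_def R_def Rpol_def)
qed

lemma Gpol_reciprocal:
  assumes eul: "eulerian P" and "y \<in> P"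
  shows "x \<in> P \<Longrightarrow> x \<le> y \<Longrightarrow> s \<noteq> 0 \<Longrightarrow> s ^ rk P x y * rpoly (Gpol P x y) (1 / s)
      = (\<Sum>z\<in>Icc_on P x y. (s - 1) ^ rk P x z * rpoly (Gpol P z y) s)"
proof (induction "card (Ioc_on P x y)" arbitrary: x s rule: less_induct)
  case less
  have fin: "finite P"
    using eul by (simp add: eulerian_def)
  show ?case
  proof (cases "x = y")
    case True
    moreover have "Icc_on P y y = {y}"
      using \<open>y \<in> P\<close> by auto
    ultimately show ?thesis
      by simp
  next
    case False
    with less.prems have "x < y"
      by simp
    show ?thesis
      using less.hyps card_Ioc_on_less[OF fin]
      by (intro Gpol_reciprocal_step[OF eul less.prems(1) \<open>y \<in> P\<close> \<open>x < y\<close> less.prems(3)]) auto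
  qed
qed

section \<open>Uniqueness of B\<close>

lemma reciprocal_family_eq_0:
  fixes F :: "'a::order \<Rightarrow> int poly poly"
  assumes fin: "finite P" and "y \<in> P" and "F y = 0"
    and deg: "\<And>x. x \<in> P \<Longrightarrow> x < y \<Longrightarrow> 2 * degree (F x) < rk P x y"
    and recip: "\<And>x u v. x \<in> P \<Longrightarrow> x \<le> y \<Longrightarrow> u \<noteq> 0 \<Longrightarrow> v \<noteq> 0 \<Longrightarrow>
      (u * v) ^ rk P x y * evalB (F x) (1 / u) (1 / v)
        = (\<Sum>z\<in>Icc_on P x y. (u * v - 1) ^ rk P x z * evalB (F z) u v)"
  shows "x \<in> P \<Longrightarrow> x \<le> y \<Longrightarrow> F x = 0"
proof (induction "card (Ioc_on P x y)" arbitrary: x rule: less_induct)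
  case less
  show ?case
  proof (cases "x = y")
    case False
    with less.prems have "x < y"
      by simp
    have IH: "F z = 0" if "z \<in> Ioc_on P x y" for z
      using less.hyps card_Ioc_on_less[OF fin that] that by auto
    have "Icc_on P x y = insert x (Ioc_on P x y)"
      using less.prems by auto
    then have "(u * v) ^ rk P x y * evalB (F x) (1 / u) (1 / v) = evalB (F x) u v"
      if "u \<noteq> 0" "v \<noteq> 0" for u v
      using recip[OF less.prems that] fin IH by simp
    then show ?thesis
      using deg[OF less.prems(1) \<open>x < y\<close>] by (intro self_reciprocal_eq_0) auto
  qed (use \<open>F y = 0\<close> in simp)
qed

lemma homog_Gpol_reciprocal:
  assumes eul: "eulerian P" and "z \<in> P" "y \<in> P" "z \<le> y" "u \<noteq> 0" "v \<noteq> 0"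
  shows "(u * v) ^ rk P z y * evalB (homog (rk P z y) (Gpol P z y)) (1 / u) (1 / v)
    = (\<Sum>w\<in>Icc_on P z y. (v - u) ^ rk P z w * evalB (homog (rk P w y) (Gpol P w y)) u v)"
proof -
  have fin: "finite P"
    using eul by (simp add: eulerian_def)
  define s where "s = v / u"
  have "s \<noteq> 0"
    using assms by (simp add: s_def)
  have "(u * v) ^ rk P z y * (1 / u) ^ rk P z y = u ^ rk P z y * s ^ rk P z y"
    using \<open>u \<noteq> 0\<close> by (simp add: s_def flip: power_mult_distrib)
  moreover have "(1 / v) / (1 / u) = 1 / s"
    by (simp add: s_def)
  ultimately have "(u * v) ^ rk P z y * evalB (homog (rk P z y) (Gpol P z y)) (1 / u) (1 / v)
      = u ^ rk P z y * (s ^ rk P z y * rpoly (Gpol P z y) (1 / s))"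
    using evalB_homog[OF degree_Gpol_le[OF fin assms(2-4)], of "1 / u" "1 / v"] \<open>u \<noteq> 0\<close>
    by (simp add: mult_ac)
  also have "\<dots> = (\<Sum>w\<in>Icc_on P z y. u ^ rk P z y * ((s - 1) ^ rk P z w * rpoly (Gpol P w y) s))"
    by (simp add: Gpol_reciprocal[OF eul assms(3,2,4) \<open>s \<noteq> 0\<close>] sum_distrib_left)
  also have "\<dots> = (\<Sum>w\<in>Icc_on P z y. (v - u) ^ rk P z w * evalB (homog (rk P w y) (Gpol P w y)) u v)"
  proof (intro sum.cong refl)
    fix w assume w: "w \<in> Icc_on P z y"
    have "u ^ rk P z y = u ^ rk P z w * u ^ rk P w y"
      using rk_add[of P z w y] w assms fin by (simp add: power_add)
    then have "u ^ rk P z y * ((s - 1) ^ rk P z w * rpoly (Gpol P w y) s)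
        = (u ^ rk P z w * (s - 1) ^ rk P z w) * (u ^ rk P w y * rpoly (Gpol P w y) s)"
      by (simp only: mult_ac)
    moreover have "u ^ rk P z w * (s - 1) ^ rk P z w = (v - u) ^ rk P z w"
      using \<open>u \<noteq> 0\<close> by (simp add: s_def right_diff_distrib flip: power_mult_distrib)
    moreover have "evalB (homog (rk P w y) (Gpol P w y)) u v = u ^ rk P w y * rpoly (Gpol P w y) s"
      using evalB_homog[OF degree_Gpol_le[of P w y] \<open>u \<noteq> 0\<close>] w assms fin by (simp add: s_def)
    ultimately show "u ^ rk P z y * ((s - 1) ^ rk P z w * rpoly (Gpol P w y) s)
        = (v - u) ^ rk P z w * evalB (homog (rk P w y) (Gpol P w y)) u v"
      by simp
  qed
  finally show ?thesis .
qed

lemma subst_uv_Gpol_reciprocal: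
  assumes "eulerian P" "x \<in> P" "y \<in> P" "x \<le> y" "u \<noteq> 0" "v \<noteq> 0"
  shows "(u * v) ^ rk P x y * evalB (subst_uv (Gpol P x y)) (1 / u) (1 / v)
    = (\<Sum>w\<in>Icc_on P x y. (u * v - 1) ^ rk P x w * evalB (subst_uv (Gpol P w y)) u v)"
  using Gpol_reciprocal[OF assms(1,3,2,4), of "u * v"] assms(5,6) by (simp add: evalB_subst_uv)

text \<open>The left-hand side of the relation defining \<^const>\<open>Bpol\<close>.\<close>
definition conv_homog_Gpol :: "'a::order set \<Rightarrow> ('a \<Rightarrow> 'a \<Rightarrow> int poly poly) \<Rightarrow> 'a \<Rightarrow> 'a \<Rightarrow> int poly poly" where
  "conv_homog_Gpol P B x y = (\<Sum>z\<in>Icc_on P x y. B x z * homog (rk P z y) (Gpol P z y))"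

lemma conv_homog_Gpol_reciprocal:
  assumes eul: "eulerian P" and "x \<in> P" "y \<in> P" "x \<le> y" "u \<noteq> 0" "v \<noteq> 0"
    and B_recip: "\<And>x y. x \<in> P \<Longrightarrow> y \<in> P \<Longrightarrow> x \<le> y \<Longrightarrow>
      (\<Sum>z\<in>Icc_on P x y. evalB (B x z) (1 / u) (1 / v) * (u * v) ^ rk P x z * (v - u) ^ rk P z y)
        = (\<Sum>z\<in>Icc_on P x y. evalB (B z y) u v * (u * v - 1) ^ rk P x z)"
  shows "(u * v) ^ rk P x y * evalB (conv_homog_Gpol P B x y) (1 / u) (1 / v)
    = (\<Sum>z\<in>Icc_on P x y. (u * v - 1) ^ rk P x z * evalB (conv_homog_Gpol P B z y) u v)"
proof -
  have fin: "finite P"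
    using eul by (simp add: eulerian_def)
  define b where "b z = evalB (B x z) (1 / u) (1 / v) * (u * v) ^ rk P x z" for z
  define g where "g w = evalB (homog (rk P w y) (Gpol P w y)) u v" for w
  have "(u * v) ^ rk P x y * evalB (conv_homog_Gpol P B x y) (1 / u) (1 / v)
      = (\<Sum>z\<in>Icc_on P x y. b z * ((u * v) ^ rk P z y
          * evalB (homog (rk P z y) (Gpol P z y)) (1 / u) (1 / v)))"
    unfolding conv_homog_Gpol_def evalB_sum sum_distrib_left
  proof (intro sum.cong refl)
    fix z assume "z \<in> Icc_on P x y"
    then have "(u * v) ^ rk P x y = (u * v) ^ rk P x z * (u * v) ^ rk P z y"
      using rk_add[of P x z y] assms fin by (simp add: power_add)
    then show "(u * v) ^ rk P x y * evalB (B x z * homog (rk P z y) (Gpol P z y)) (1 / u) (1 / v)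
        = b z * ((u * v) ^ rk P z y * evalB (homog (rk P z y) (Gpol P z y)) (1 / u) (1 / v))"
      by (simp add: b_def mult_ac)
  qed
  also have "\<dots> = (\<Sum>z\<in>Icc_on P x y. \<Sum>w\<in>Icc_on P z y. b z * (v - u) ^ rk P z w * g w)"
    using homog_Gpol_reciprocal[OF eul _ \<open>y \<in> P\<close> _ \<open>u \<noteq> 0\<close> \<open>v \<noteq> 0\<close>]
    by (intro sum.cong refl) (simp add: g_def sum_distrib_left mult.assoc)
  also have "\<dots> = (\<Sum>w\<in>Icc_on P x y. (\<Sum>z\<in>Icc_on P x w. b z * (v - u) ^ rk P z w) * g w)"
    unfolding sum_Icc_on_swap[OF fin] sum_distrib_right ..
  also have "\<dots> = (\<Sum>w\<in>Icc_on P x y. (\<Sum>z\<in>Icc_on P x w. evalB (B z w) u v * (u * v - 1) ^ rk P x z) * g w)"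
    using B_recip \<open>x \<in> P\<close> by (intro sum.cong refl) (simp add: b_def)
  also have "\<dots> = (\<Sum>z\<in>Icc_on P x y. \<Sum>w\<in>Icc_on P z y. (u * v - 1) ^ rk P x z * (evalB (B z w) u v * g w))"
    unfolding sum_Icc_on_swap[OF fin] sum_distrib_right by (simp only: mult_ac)
  also have "\<dots> = (\<Sum>z\<in>Icc_on P x y. (u * v - 1) ^ rk P x z * evalB (conv_homog_Gpol P B z y) u v)"
    by (simp add: conv_homog_Gpol_def g_def sum_distrib_left)
  finally show ?thesis .
qed

lemma degree_conv_homog_Gpol_less:
  assumes fin: "finite P" and "x \<in> P" "y \<in> P" "x < y"
    and B_refl: "B x x = 1"
    and B_deg: "\<And>z. z \<in> P \<Longrightarrow> x < z \<Longrightarrow> 2 * degree (B x z) < rk P x z"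
  shows "2 * degree (conv_homog_Gpol P B x y) < rk P x y"
proof -
  define e where "e = rk P x y"
  have "degree (B x z * homog (rk P z y) (Gpol P z y)) < (e + 1) div 2" if z: "z \<in> Icc_on P x y" for z
  proof -
    have "2 * degree (B x z) + 2 * degree (Gpol P z y) < e"
    proof (cases "z = x")
      case True
      then show ?thesis
        using B_refl degree_Gpol_less[OF fin assms(2-4)] by (simp add: e_def)
    next
      case False
      with z have "x < z"
        by (simp add: order.strict_iff_order)
      have "e = rk P x z + rk P z y"
        unfolding e_def using z by (intro rk_add[OF fin \<open>x \<in> P\<close>]) (simp_all add: \<open>y \<in> P\<close>)
      moreover have "2 * degree (B x z) < rk P x z"
        using B_deg z \<open>x < z\<close> by simp
      moreover have "2 * degree (Gpol P z y) \<le> rk P z y"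
        using degree_Gpol_half_le[OF fin _ \<open>y \<in> P\<close>] z by simp
      ultimately show ?thesis
        by linarith
    qed
    moreover obtain h where "h = homog (rk P z y) (Gpol P z y)"
      by simp
    then have "degree (B x z * h) \<le> degree (B x z) + degree (Gpol P z y)"
      using degree_mult_le[of "B x z" h] degree_homog[of "rk P z y" "Gpol P z y"] by simp
    ultimately have "2 * degree (B x z * h) < e"
      by linarith
    with \<open>h = _\<close> show ?thesis
      by simp
  qed
  moreover have "0 < e"
    using rho_less[OF fin assms(2-4)] by (simp add: e_def)
  ultimately have "degree (conv_homog_Gpol P B x y) < (e + 1) div 2"
    unfolding conv_homog_Gpol_def by (intro degree_sum_less) auto
  then show ?thesis
    unfolding e_def[symmetric] by presburger
qed

lemma conv_homog_Gpol_eq_subst_uv: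
  assumes eul: "eulerian P" and "y \<in> P"
    and B_refl: "\<And>x. x \<in> P \<Longrightarrow> B x x = 1"
    and B_deg: "\<And>x y. x \<in> P \<Longrightarrow> y \<in> P \<Longrightarrow> x < y \<Longrightarrow> 2 * degree (B x y) < rk P x y"
    and B_recip: "\<And>x y u v. x \<in> P \<Longrightarrow> y \<in> P \<Longrightarrow> x \<le> y \<Longrightarrow> u \<noteq> 0 \<Longrightarrow> v \<noteq> 0 \<Longrightarrow>
      (\<Sum>z\<in>Icc_on P x y. evalB (B x z) (1 / u) (1 / v) * (u * v) ^ rk P x z * (v - u) ^ rk P z y)
        = (\<Sum>z\<in>Icc_on P x y. evalB (B z y) u v * (u * v - 1) ^ rk P x z)"
  shows "x \<in> P \<Longrightarrow> x \<le> y \<Longrightarrow> conv_homog_Gpol P B x y = subst_uv (Gpol P x y)"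
proof -
  have fin: "finite P"
    using eul by (simp add: eulerian_def)
  define F where "F x = conv_homog_Gpol P B x y - subst_uv (Gpol P x y)" for x
  have "F y = 0"
  proof -
    have "Icc_on P y y = {y}"
      using \<open>y \<in> P\<close> by auto
    then show ?thesis
      using B_refl[OF \<open>y \<in> P\<close>] by (simp add: F_def conv_homog_Gpol_def)
  qed
  moreover have "2 * degree (F x) < rk P x y" if "x \<in> P" "x < y" for x
  proof -
    have "2 * degree (conv_homog_Gpol P B x y) < rk P x y"
      using B_refl B_deg that \<open>y \<in> P\<close> by (intro degree_conv_homog_Gpol_less[OF fin]) auto
    moreover have "2 * degree (subst_uv (Gpol P x y)) < rk P x y"
      using degree_subst_uv[of "Gpol P x y"] degree_Gpol_less[OF fin that(1) \<open>y \<in> P\<close> that(2)]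
      by linarith
    ultimately show ?thesis
      using degree_diff_le_max[of "conv_homog_Gpol P B x y" "subst_uv (Gpol P x y)"]
      by (simp add: F_def)
  qed
  moreover have "(u * v) ^ rk P x y * evalB (F x) (1 / u) (1 / v)
      = (\<Sum>z\<in>Icc_on P x y. (u * v - 1) ^ rk P x z * evalB (F z) u v)"
    if "x \<in> P" "x \<le> y" "u \<noteq> 0" "v \<noteq> 0" for x u v
    using conv_homog_Gpol_reciprocal[OF eul that(1) \<open>y \<in> P\<close> that(2-4) B_recip]
      subst_uv_Gpol_reciprocal[OF eul that(1) \<open>y \<in> P\<close> that(2-4)] that(3,4)
    by (simp add: F_def right_diff_distrib sum_subtractf)
  ultimately show "x \<in> P \<Longrightarrow> x \<le> y \<Longrightarrow> conv_homog_Gpol P B x y = subst_uv (Gpol P x y)"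
    using reciprocal_family_eq_0[OF fin \<open>y \<in> P\<close>, of F x] by (simp add: F_def)
qed

lemma Bpol_unique:
  assumes fin: "finite P" and "x \<in> P"
    and B_refl: "B x x = 1"
    and B_rel: "\<And>y. y \<in> P \<Longrightarrow> x < y \<Longrightarrow> conv_homog_Gpol P B x y = subst_uv (Gpol P x y)"
  shows "y \<in> P \<Longrightarrow> x \<le> y \<Longrightarrow> B x y = Bpol P x y"
proof (induction "card (Ico_on P x y)" arbitrary: y rule: less_induct)
  case less
  show ?case
  proof (cases "x = y")
    case False
    with less.prems have "x < y"
      by (simp add: order.strict_iff_order)
    have IH: "B x z = Bpol P x z" if "z \<in> Ico_on P x y" for z
      using less.hyps card_Ico_on_less[OF fin that] that by auto
    have "Icc_on P x y = insert y (Ico_on P x y)"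
      using less.prems by auto
    then have "conv_homog_Gpol P B x y
        = B x y + (\<Sum>z\<in>Ico_on P x y. Bpol P x z * homog (rk P z y) (Gpol P z y))"
      using fin IH by (simp add: conv_homog_Gpol_def)
    then show ?thesis
      using B_rel[OF less.prems(1) \<open>x < y\<close>] Bpol_rec[OF fin \<open>x \<in> P\<close> \<open>x < y\<close>] by simp
  qed (use B_refl in simp)
qed

theorem proposition2p12:
  fixes P :: "'a::order set" and B' :: "'a \<Rightarrow> 'a \<Rightarrow> int poly poly"
  assumes eul: "eulerian P"
    and a: "\<forall>x\<in>P. B' x x = 1"
    and b: "\<forall>x\<in>P. \<forall>y\<in>P. x < y \<longrightarrow> 2 * degree (B' x y) < rho P y - rho P x"
    and c: "\<forall>x\<in>P. \<forall>y\<in>P. x \<le> y \<longrightarrow> (\<forall>u v :: real. u \<noteq> 0 \<longrightarrow> v \<noteq> 0 \<longrightarrow>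
              (\<Sum>z\<in>{z\<in>P. x \<le> z \<and> z \<le> y}.
                  evalB (B' x z) (1 / u) (1 / v) * (u * v) ^ (rho P z - rho P x)
                  * (v - u) ^ (rho P y - rho P z))
            = (\<Sum>z\<in>{z\<in>P. x \<le> z \<and> z \<le> y}.
                  evalB (B' z y) u v * (u * v - 1) ^ (rho P z - rho P x)))"
  shows "\<forall>x\<in>P. \<forall>y\<in>P. x \<le> y \<longrightarrow> B' x y = Bpol P x y"
proof (intro ballI impI)
  fix x y assume "x \<in> P" "y \<in> P" "x \<le> y"
  have fin: "finite P"
    using eul by (simp add: eulerian_def)
  have "conv_homog_Gpol P B' x y' = subst_uv (Gpol P x y')" if "y' \<in> P" "x \<le> y'" for y'
    using conv_homog_Gpol_eq_subst_uv[OF eul that(1), of B' x] a b c \<open>x \<in> P\<close> that(2) by blast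
  then show "B' x y = Bpol P x y"
    using Bpol_unique[OF fin \<open>x \<in> P\<close>] a \<open>x \<in> P\<close> \<open>y \<in> P\<close> \<open>x \<le> y\<close> by auto
qed

end
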